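(* Let $a>0$, $k_d>0$, $x_0\in\mathbb{R}$, $y_0\in\mathbb{R}\setminus\{0\}$, and $\rho>0$ with $\rho a>2|y_0|$. For $(\ell_1,\ell_2)\in\mathbb{Z}^2$ set $$s(\ell_1,\ell_2)=\frac{\ell_1a-x_0+i(\ell_2a-y_0)}{|\ell_1a-x_0+i(\ell_2a-y_0)|}\cdot\frac{\ell_1a-x_0-i(\ell_2a+y_0)}{|\ell_1a-x_0-i(\ell_2a+y_0)|},$$ $\epsilon^{(1)}_{\ell_1,\ell_2}=\frac{a}{2\pi}\operatorname{Arg}\frac{s(\ell_1+1,\ell_2)}{s(\ell_1,\ell_2)}$, $\epsilon^{(2)}_{\ell_1,\ell_2}=\frac{a}{2\pi}\operatorname{Arg}\frac{s(\ell_1,\ell_2+1)}{s(\ell_1,\ell_2)}$, and $\Delta^{d(i,\pm)}_{\ell_1,\ell_2}=\sqrt{(a\pm\epsilon^{(i)}_{\ell_1,\ell_2})^2+a^2}-\sqrt2a$ for $i=1,2$. For $N>\rho$ let $B'_{\rho,N}$ be the set of $(\ell_1,\ell_2)\in\mathbb{Z}^2$ with $\rho a<\sqrt{(\ell_1a-x_0)^2+(\ell_2a-y_0)^2}<Na$ and $\rho a<\sqrt{(\ell_1a-x_0)^2+(\ell_2a+y_0)^2}<Na$, and $$E_{\rho,N}(\mathcal{S})=\sum_{(\ell_1,\ell_2)\in B'_{\rho,N}}\tfrac12k_d\Big((\Delta^{d(1,+)}_{\ell_1,\ell_2})^2+(\Delta^{d(2,+)}_{\ell_1,\ell_2})^2+(\Delta^{d(1,-)}_{\ell_1,\ell_2})^2+(\Delta^{d(2,-)}_{\ell_1,\ell_2})^2\Big).$$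 Then $E_{\rho,N}(\mathcal{S})$ converges to a finite limit as $N\to\infty$.
   Context: $\operatorname{Arg}$ is the principal argument in $(-\pi,\pi]$. This is the discrete (simple cubic lattice, spacing $a$, spring model with diagonal spring constant $k_d$) elastic energy of two parallel screw dislocations of opposite signs, $\mathcal{S}_+=\{x_0+iy_0\}$ and $\mathcal{S}_-=\{x_0-iy_0\}$. *)

theory Defs
  imports "HOL-Analysis.Analysis"
begin

definition sfield :: "real \<Rightarrow> real \<Rightarrow> real \<Rightarrow> int \<Rightarrow> int \<Rightarrow> complex" where
  "sfield a x0 y0 l1 l2 =
     (let z1 = Complex (real_of_int l1 * a - x0) (real_of_int l2 * a - y0);
          z2 = Complex (real_of_int l1 * a - x0) (- (real_of_int l2 * a + y0))
      in (z1 / complex_of_real (cmod z1)) * (z2 / complex_of_real (cmod z2)))"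

definition eps1 :: "real \<Rightarrow> real \<Rightarrow> real \<Rightarrow> int \<Rightarrow> int \<Rightarrow> real" where
  "eps1 a x0 y0 l1 l2 = a / (2 * pi) * Arg (sfield a x0 y0 (l1 + 1) l2 / sfield a x0 y0 l1 l2)"

definition eps2 :: "real \<Rightarrow> real \<Rightarrow> real \<Rightarrow> int \<Rightarrow> int \<Rightarrow> real" where
  "eps2 a x0 y0 l1 l2 = a / (2 * pi) * Arg (sfield a x0 y0 l1 (l2 + 1) / sfield a x0 y0 l1 l2)"

definition Delta_d :: "real \<Rightarrow> real \<Rightarrow> real" where
  "Delta_d a e = sqrt ((a + e)^2 + a^2) - sqrt 2 * a"

definition Bprime :: "real \<Rightarrow> real \<Rightarrow> real \<Rightarrow> real \<Rightarrow> real \<Rightarrow> (int \<times> int) set" where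
  "Bprime a x0 y0 \<rho> N = {(l1, l2). 
      \<rho> * a < sqrt ((real_of_int l1 * a - x0)^2 + (real_of_int l2 * a - y0)^2) \<and>
      sqrt ((real_of_int l1 * a - x0)^2 + (real_of_int l2 * a - y0)^2) < N * a \<and>
      \<rho> * a < sqrt ((real_of_int l1 * a - x0)^2 + (real_of_int l2 * a + y0)^2) \<and>
      sqrt ((real_of_int l1 * a - x0)^2 + (real_of_int l2 * a + y0)^2) < N * a}"

definition Energy :: "real \<Rightarrow> real \<Rightarrow> real \<Rightarrow> real \<Rightarrow> real \<Rightarrow> real \<Rightarrow> real" where
  "Energy a kd x0 y0 \<rho> N = (\<Sum>(l1, l2)\<in>Bprime a x0 y0 \<rho> N.
      1/2 * kd * ((Delta_d a (eps1 a x0 y0 l1 l2))^2 + (Delta_d a (eps2 a x0 y0 l1 l2))^2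
                + (Delta_d a (- eps1 a x0 y0 l1 l2))^2 + (Delta_d a (- eps2 a x0 y0 l1 l2))^2))"

end

theory Submission
  imports Defs
begin

text \<open>Writing \<open>W\<close> for the offset of a site from \<open>x0 - i y0\<close>, the field is
  \<open>s = sgn (1 - 2 i y0 / W)\<close>. Once \<open>|W| > \<rho> a > 2 |y0|\<close>, moving to a neighbouring site
  changes \<open>s\<close> by \<open>O(|W|\<^sup>-\<^sup>2)\<close>; since \<open>|Arg v| \<le> 2 \<pi> |v - 1|\<close> and \<open>|Delta_d a e| \<le> |e|\<close>, each
  summand of the energy is \<open>O(|W|\<^sup>-\<^sup>4)\<close>, hence at most \<open>C / ((1 + l1\<^sup>2) (1 + l2\<^sup>2))\<close>, whose sum
  over \<open>\<int>\<^sup>2\<close> is finite. So the energies are bounded, and they increase with \<open>N\<close> because the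
  summands are nonnegative and the regions grow.\<close>

lemma abs_Arg_le_norm_diff_one: "\<bar>Arg v\<bar> \<le> 2 * pi * cmod (v - 1)"
proof (cases "cmod (v - 1) < 1/2")
  case True
  have "\<bar>Re v - 1\<bar> < 1/2" using abs_Re_le_cmod[of "v - 1"] True by simp
  hence re: "Re v > 1/2" by linarith
  have "\<bar>Arg v\<bar> = \<bar>arctan (Im v / Re v)\<bar>" using re by (simp add: arg_conv_arctan)
  also have "\<dots> \<le> \<bar>Im v\<bar> / Re v" using re abs_arctan_le[of "Im v / Re v"] by (simp add: abs_divide)
  also have "\<dots> \<le> 2 * \<bar>Im v\<bar>"
    using re mult_left_mono[of 1 "2 * Re v" "\<bar>Im v\<bar>"] by (simp add: divide_le_eq algebra_simps)
  also have "\<dots> \<le> 2 * cmod (v - 1)" using abs_Im_le_cmod[of "v - 1"] by simp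
  also have "\<dots> \<le> 2 * pi * cmod (v - 1)" using pi_gt3 by (simp add: mult_right_mono)
  finally show ?thesis .
next
  case False
  have "\<bar>Arg v\<bar> \<le> pi" using mpi_less_Arg[of v] Arg_le_pi[of v] by linarith
  also have "\<dots> \<le> 2 * pi * cmod (v - 1)" using False pi_gt_zero by (simp add: mult_left_mono)
  finally show ?thesis .
qed

lemma abs_Arg_divide_le:
  assumes "cmod s = 1" shows "\<bar>Arg (s' / s)\<bar> \<le> 2 * pi * cmod (s' - s)"
proof -
  have "s \<noteq> 0" using assms by auto
  hence "s' / s - 1 = (s' - s) / s" by (simp add: field_simps)
  hence "cmod (s' / s - 1) = cmod (s' - s)" using assms by (simp add: norm_divide)
  thus ?thesis using abs_Arg_le_norm_diff_one[of "s' / s"] by simp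
qed

lemma norm_sgn_diff_le:
  fixes z w :: "'a::real_normed_vector" assumes "w \<noteq> 0"
  shows "norm (sgn z - sgn w) \<le> 2 * norm (z - w) / norm w"
proof (cases "z = 0")
  case True thus ?thesis using assms by (simp add: norm_sgn)
next
  case False
  have "sgn z - sgn w = (inverse (norm z) - inverse (norm w)) *\<^sub>R z + inverse (norm w) *\<^sub>R (z - w)"
    by (simp add: sgn_div_norm divide_inverse_commute algebra_simps scaleR_diff_right scaleR_diff_left)
  hence "norm (sgn z - sgn w) \<le> \<bar>inverse (norm z) - inverse (norm w)\<bar> * norm z + norm (z - w) / norm w"
    using norm_triangle_ineq[of "(inverse (norm z) - inverse (norm w)) *\<^sub>R z" "inverse (norm w) *\<^sub>R (z - w)"]
    by (simp add: divide_inverse_commute)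
  also have "\<bar>inverse (norm z) - inverse (norm w)\<bar> * norm z = \<bar>norm w - norm z\<bar> / norm w"
    using False assms by (simp add: field_simps abs_mult[symmetric] abs_divide)
  also have "\<dots> \<le> norm (z - w) / norm w"
    using norm_triangle_ineq3[of z w] by (simp add: divide_right_mono abs_minus_commute)
  finally show ?thesis by simp
qed

lemma norm_sgn_one_minus_divide_shift_le:
  fixes w d b :: complex and a B r :: real
  assumes b: "cmod b \<le> B" and Br: "B < r" and w: "r < cmod w" and d: "cmod d \<le> a"
  shows "cmod (sgn (1 - b / (w + d)) - sgn (1 - b / w))
           \<le> (4 * B * a * r / (r - B) + 8 * a\<^sup>2) / (cmod w)\<^sup>2"
proof -
  have B0: "0 \<le> B" using b norm_ge_zero order_trans by blast
  have a0: "0 \<le> a" using d norm_ge_zero order_trans by blast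
  have r0: "0 < r" using B0 Br by linarith
  have w0: "0 < cmod w" using r0 w by linarith
  have first_nonneg: "0 \<le> 4 * B * a * r / (r - B)" using B0 a0 r0 Br by simp
  show ?thesis
  proof (cases "cmod w < 2 * a")
    case True
    have sgn_le: "cmod (sgn z) \<le> 1" for z :: complex by (simp add: norm_sgn)
    have "cmod (sgn (1 - b / (w + d)) - sgn (1 - b / w)) \<le> 2"
      using norm_triangle_ineq4[of "sgn (1 - b / (w + d))" "sgn (1 - b / w)"]
        sgn_le[of "1 - b / (w + d)"] sgn_le[of "1 - b / w"] by linarith
    also have "2 \<le> 8 * a\<^sup>2 / (cmod w)\<^sup>2"
    proof -
      have "(cmod w)\<^sup>2 \<le> (2 * a)\<^sup>2" using True w0 by (intro power_mono) auto
      thus ?thesis using w0 by (simp add: field_simps power_mult_distrib)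
    qed
    finally have "cmod (sgn (1 - b / (w + d)) - sgn (1 - b / w)) \<le> 8 * a\<^sup>2 / (cmod w)\<^sup>2" .
    moreover have "0 \<le> 4 * B * a * r / (r - B) / (cmod w)\<^sup>2"
      using first_nonneg by (rule divide_nonneg_nonneg) simp
    ultimately show ?thesis unfolding add_divide_distrib by linarith
  next
    case False
    have "cmod b / cmod w \<le> B / r" using b B0 w r0 by (intro frac_le) auto
    moreover have "1 - cmod b / cmod w \<le> cmod (1 - b / w)"
      using norm_triangle_ineq2[of 1 "b / w"] by (simp add: norm_divide)
    moreover have "1 - B / r = (r - B) / r" using r0 by (simp add: field_simps)
    ultimately have far: "(r - B) / r \<le> cmod (1 - b / w)" by linarith
    have "cmod w - a \<le> cmod (w + d)" using norm_diff_ineq[of w d] d by simp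
    hence wd: "cmod w / 2 \<le> cmod (w + d)" using False by linarith
    have "(1 - b / (w + d)) - (1 - b / w) = b * d / (w * (w + d))"
    proof -
      have "w \<noteq> 0" "w + d \<noteq> 0" using w0 wd by auto
      thus ?thesis by (simp add: field_simps)
    qed
    hence "cmod ((1 - b / (w + d)) - (1 - b / w)) = cmod b * cmod d / (cmod w * cmod (w + d))"
      by (simp add: norm_mult norm_divide)
    also have "\<dots> \<le> B * a / (cmod w * (cmod w / 2))"
      using b d wd w0 B0 a0 by (intro frac_le mult_mono mult_left_mono) auto
    also have "\<dots> = 2 * B * a / (cmod w)\<^sup>2" by (simp add: power2_eq_square)
    finally have close: "cmod ((1 - b / (w + d)) - (1 - b / w)) \<le> 2 * B * a / (cmod w)\<^sup>2" .
    have "0 < (r - B) / r" using r0 Br by simp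
    hence "1 - b / w \<noteq> 0" using far by auto
    hence "cmod (sgn (1 - b / (w + d)) - sgn (1 - b / w))
             \<le> 2 * cmod ((1 - b / (w + d)) - (1 - b / w)) / cmod (1 - b / w)"
      by (rule norm_sgn_diff_le)
    also have "\<dots> \<le> 2 * (2 * B * a / (cmod w)\<^sup>2) / ((r - B) / r)"
      using close far r0 Br B0 a0 by (intro frac_le) auto
    also have "\<dots> = 4 * B * a * r / (r - B) / (cmod w)\<^sup>2" by (simp add: field_simps)
    also have "\<dots> \<le> (4 * B * a * r / (r - B) + 8 * a\<^sup>2) / (cmod w)\<^sup>2"
      by (intro divide_right_mono) auto
    finally show ?thesis .
  qed
qed

lemma abs_Delta_d_le:
  assumes "0 \<le> a" shows "\<bar>Delta_d a e\<bar> \<le> \<bar>e\<bar>"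
proof -
  have "sqrt ((a + e)\<^sup>2 + a\<^sup>2) = cmod (Complex (a + e) a)" by (simp add: cmod_def)
  moreover have "sqrt 2 * a = cmod (Complex a a)"
    using assms by (simp add: cmod_def real_sqrt_mult power2_eq_square)
  moreover have "\<bar>cmod (Complex (a + e) a) - cmod (Complex a a)\<bar> \<le> cmod (Complex (a + e) a - Complex a a)"
    by (rule norm_triangle_ineq3)
  ultimately show ?thesis by (simp add: Delta_d_def cmod_def)
qed

definition energy_density :: "real \<Rightarrow> real \<Rightarrow> real \<Rightarrow> real \<Rightarrow> int \<Rightarrow> int \<Rightarrow> real" where
  "energy_density a kd x0 y0 l1 l2 =
     1/2 * kd * ((Delta_d a (eps1 a x0 y0 l1 l2))\<^sup>2 + (Delta_d a (eps2 a x0 y0 l1 l2))\<^sup>2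
               + (Delta_d a (- eps1 a x0 y0 l1 l2))\<^sup>2 + (Delta_d a (- eps2 a x0 y0 l1 l2))\<^sup>2)"

lemma Energy_eq_sum_energy_density:
  "Energy a kd x0 y0 \<rho> N = (\<Sum>(l1, l2)\<in>Bprime a x0 y0 \<rho> N. energy_density a kd x0 y0 l1 l2)"
  by (simp add: Energy_def energy_density_def)

text \<open>Position of a lattice site relative to the dislocation \<open>x0 - i y0\<close>; relative to
  \<open>x0 + i y0\<close> it is \<open>site_offset - 2 i y0\<close>.\<close>

definition site_offset :: "real \<Rightarrow> real \<Rightarrow> real \<Rightarrow> int \<Rightarrow> int \<Rightarrow> complex" where
  "site_offset a x0 y0 l1 l2 = Complex (real_of_int l1 * a - x0) (real_of_int l2 * a + y0)"

lemma norm_site_offset: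
  "cmod (site_offset a x0 y0 l1 l2) = sqrt ((real_of_int l1 * a - x0)\<^sup>2 + (real_of_int l2 * a + y0)\<^sup>2)"
  by (simp add: site_offset_def cmod_def)

lemma site_offset_step1: "site_offset a x0 y0 (l1 + 1) l2 = site_offset a x0 y0 l1 l2 + of_real a"
  by (simp add: site_offset_def complex_eq_iff algebra_simps)

lemma site_offset_step2: "site_offset a x0 y0 l1 (l2 + 1) = site_offset a x0 y0 l1 l2 + \<i> * of_real a"
  by (simp add: site_offset_def complex_eq_iff algebra_simps)

lemma sfield_eq_sgn:
  fixes a x0 y0 :: real and l1 l2 :: int
  defines "W \<equiv> site_offset a x0 y0 l1 l2"
  shows "sfield a x0 y0 l1 l2 = sgn ((W - Complex 0 (2 * y0)) / W)"
proof -
  define z where "z = Complex (real_of_int l1 * a - x0) (real_of_int l2 * a - y0)"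
  have z: "z = W - Complex 0 (2 * y0)" unfolding z_def W_def site_offset_def by (simp add: complex_eq_iff)
  have "Complex (real_of_int l1 * a - x0) (- (real_of_int l2 * a + y0)) = cnj W"
    unfolding W_def site_offset_def by (simp add: complex_eq_iff)
  moreover have "z / cmod z * (cnj W / cmod W) = sgn (z / W)"
  proof (cases "z = 0 \<or> W = 0")
    case False
    hence "cnj W / cmod W = cmod W / W"
      by (simp add: field_simps complex_norm_square[symmetric] power2_eq_square complex_mult_cnj)
    thus ?thesis using False by (simp add: sgn_eq norm_divide field_simps)
  qed auto
  ultimately show ?thesis unfolding sfield_def Let_def z_def[symmetric] z by simp
qed

lemma abs_strain_le:
  fixes a x0 y0 \<rho> :: real and l1 l2 l1' l2' :: int and d :: complex
  defines "W \<equiv> site_offset a x0 y0 l1 l2"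
    and "K \<equiv> 4 * (2 * \<bar>y0\<bar>) * a * (\<rho> * a) / (\<rho> * a - 2 * \<bar>y0\<bar>) + 8 * a\<^sup>2"
  assumes y0: "2 * \<bar>y0\<bar> < \<rho> * a" and W: "\<rho> * a < cmod W"
    and step: "site_offset a x0 y0 l1' l2' = W + d" and d: "cmod d \<le> a"
  shows "\<bar>a / (2 * pi) * Arg (sfield a x0 y0 l1' l2' / sfield a x0 y0 l1 l2)\<bar> \<le> a * K / (cmod W)\<^sup>2"
proof -
  define b where "b = Complex 0 (2 * y0)"
  have b: "cmod b = 2 * \<bar>y0\<bar>" unfolding b_def by (simp add: cmod_def real_sqrt_mult)
  have a: "0 \<le> a" using d norm_ge_zero order_trans by blast
  have W0: "W \<noteq> 0" using W y0 by auto
  have s: "sfield a x0 y0 l1 l2 = sgn (1 - b / W)"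
    using W0 by (simp add: sfield_eq_sgn W_def[symmetric] b_def[symmetric] diff_divide_distrib)
  have "cmod (b / W) < 1" using b W y0 by (simp add: norm_divide divide_less_eq)
  hence s1: "cmod (sfield a x0 y0 l1 l2) = 1" unfolding s by (auto simp: norm_sgn)
  show ?thesis
  proof (cases "W + d = 0")
    case True
    have "sfield a x0 y0 l1' l2' = 0" by (simp add: sfield_eq_sgn step True)
    moreover have "0 \<le> K" unfolding K_def using a y0 by simp
    ultimately show ?thesis using a by (simp add: Arg_zero)
  next
    case False
    have s': "sfield a x0 y0 l1' l2' = sgn (1 - b / (W + d))"
      using False by (simp add: sfield_eq_sgn step b_def[symmetric] diff_divide_distrib)
    have "\<bar>a / (2 * pi) * Arg (sfield a x0 y0 l1' l2' / sfield a x0 y0 l1 l2)\<bar>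
            = a / (2 * pi) * \<bar>Arg (sfield a x0 y0 l1' l2' / sfield a x0 y0 l1 l2)\<bar>"
      using a by (simp add: abs_mult)
    also have "\<dots> \<le> a / (2 * pi) * (2 * pi * cmod (sfield a x0 y0 l1' l2' - sfield a x0 y0 l1 l2))"
      using a abs_Arg_divide_le[OF s1] by (intro mult_left_mono) auto
    also have "\<dots> = a * cmod (sgn (1 - b / (W + d)) - sgn (1 - b / W))" by (simp add: s s')
    also have "\<dots> \<le> a * (K / (cmod W)\<^sup>2)"
      unfolding K_def using b y0 W d a
      by (intro mult_left_mono norm_sgn_one_minus_divide_shift_le) auto
    finally show ?thesis by simp
  qed
qed

lemma norm_site_offset_sq_ge:
  assumes R: "0 < R" and W: "R \<le> (cmod (site_offset a x0 y0 l1 l2))\<^sup>2"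
  shows "min (a\<^sup>2 / 2) R / (2 + (x0\<^sup>2 + y0\<^sup>2) / R) * (1 + (real_of_int l1)\<^sup>2 + (real_of_int l2)\<^sup>2)
           \<le> (cmod (site_offset a x0 y0 l1 l2))\<^sup>2"
proof -
  define t where "t = (cmod (site_offset a x0 y0 l1 l2))\<^sup>2"
  define D where "D = x0\<^sup>2 + y0\<^sup>2"
  define L where "L = (real_of_int l1)\<^sup>2 + (real_of_int l2)\<^sup>2"
  have t: "t = (real_of_int l1 * a - x0)\<^sup>2 + (real_of_int l2 * a + y0)\<^sup>2"
    unfolding t_def norm_site_offset by simp
  have half: "u\<^sup>2 / 2 - v\<^sup>2 \<le> (u - v)\<^sup>2" for u v :: real
    using zero_le_power2[of "u - 2 * v"] by (simp add: power2_eq_square field_simps)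
  have "a\<^sup>2 * L / 2 - D \<le> t"
    using half[of "real_of_int l1 * a" x0] half[of "real_of_int l2 * a" "- y0"]
    unfolding t L_def D_def by (simp add: power_mult_distrib field_simps)
  moreover have "D \<le> t * (D / R)"
    using W R mult_right_mono[of R t "D / R"] unfolding t_def D_def by simp
  ultimately have "a\<^sup>2 / 2 * L + R \<le> t * (2 + D / R)" using W unfolding t_def by (simp add: algebra_simps)
  moreover have "min (a\<^sup>2 / 2) R * (1 + L) \<le> a\<^sup>2 / 2 * L + R"
  proof -
    have "min (a\<^sup>2 / 2) R * L \<le> a\<^sup>2 / 2 * L" unfolding L_def by (intro mult_right_mono) auto
    moreover have "min (a\<^sup>2 / 2) R \<le> R" by simp
    ultimately show ?thesis by (simp add: algebra_simps)
  qed
  moreover have "0 < 2 + D / R" using R unfolding D_def by (simp add: add_pos_nonneg)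
  ultimately have "min (a\<^sup>2 / 2) R * (1 + L) / (2 + D / R) \<le> t"
    by (simp add: divide_le_eq)
  thus ?thesis unfolding t_def D_def L_def by (simp add: add.assoc)
qed

lemma energy_density_nonneg: "0 \<le> kd \<Longrightarrow> 0 \<le> energy_density a kd x0 y0 l1 l2"
  by (simp add: energy_density_def)

lemma energy_density_le:
  assumes a: "0 \<le> a" and kd: "0 \<le> kd"
    and e1: "\<bar>eps1 a x0 y0 l1 l2\<bar> \<le> e" and e2: "\<bar>eps2 a x0 y0 l1 l2\<bar> \<le> e"
  shows "energy_density a kd x0 y0 l1 l2 \<le> 2 * kd * e\<^sup>2"
proof -
  have sq: "(Delta_d a x)\<^sup>2 \<le> e\<^sup>2" if "\<bar>x\<bar> \<le> e" for x
    using abs_Delta_d_le[OF a, of x] that by (simp add: abs_le_square_iff[symmetric])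
  have "energy_density a kd x0 y0 l1 l2 \<le> 1/2 * kd * (e\<^sup>2 + e\<^sup>2 + e\<^sup>2 + e\<^sup>2)"
    unfolding energy_density_def using kd e1 e2
    by (intro mult_left_mono add_mono sq) auto
  thus ?thesis by simp
qed

lemma energy_density_decay:
  assumes a: "0 < a" and kd: "0 \<le> kd" and y0: "2 * \<bar>y0\<bar> < \<rho> * a"
  obtains C where "0 \<le> C"
    and "\<And>l1 l2. \<rho> * a < cmod (site_offset a x0 y0 l1 l2) \<Longrightarrow>
           energy_density a kd x0 y0 l1 l2 \<le> C / ((1 + (real_of_int l1)\<^sup>2) * (1 + (real_of_int l2)\<^sup>2))"
proof
  define K where "K = 4 * (2 * \<bar>y0\<bar>) * a * (\<rho> * a) / (\<rho> * a - 2 * \<bar>y0\<bar>) + 8 * a\<^sup>2"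
  define m where "m = min (a\<^sup>2 / 2) ((\<rho> * a)\<^sup>2) / (2 + (x0\<^sup>2 + y0\<^sup>2) / (\<rho> * a)\<^sup>2)"
  have \<rho>a: "0 < \<rho> * a" using y0 by linarith
  have m: "0 < m" unfolding m_def using a \<rho>a by (intro divide_pos_pos add_pos_nonneg) auto
  show "0 \<le> 2 * kd * (a * K)\<^sup>2 / m\<^sup>2" using kd by simp
  fix l1 l2
  assume W: "\<rho> * a < cmod (site_offset a x0 y0 l1 l2)"
  define t where "t = (cmod (site_offset a x0 y0 l1 l2))\<^sup>2"
  define P where "P = (1 + (real_of_int l1)\<^sup>2) * (1 + (real_of_int l2)\<^sup>2)"
  have "(\<rho> * a)\<^sup>2 \<le> t" unfolding t_def using W \<rho>a by (intro power_mono) auto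
  hence mt: "m * (1 + (real_of_int l1)\<^sup>2 + (real_of_int l2)\<^sup>2) \<le> t"
    unfolding m_def t_def using \<rho>a by (intro norm_site_offset_sq_ge) auto
  have "(1 + x) * (1 + y) \<le> (1 + x + y)\<^sup>2" if "0 \<le> x" "0 \<le> y" for x y :: real
    using that mult_nonneg_nonneg[OF that] by (simp add: power2_eq_square algebra_simps)
  hence "P \<le> (1 + (real_of_int l1)\<^sup>2 + (real_of_int l2)\<^sup>2)\<^sup>2" unfolding P_def by simp
  hence "m\<^sup>2 * P \<le> m\<^sup>2 * (1 + (real_of_int l1)\<^sup>2 + (real_of_int l2)\<^sup>2)\<^sup>2"
    by (rule mult_left_mono) simp
  also have "\<dots> \<le> t\<^sup>2"
    using power_mono[OF mt, of 2] m by (simp add: power_mult_distrib)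
  finally have mP: "m\<^sup>2 * P \<le> t\<^sup>2" .
  have P: "0 < P" unfolding P_def by (simp add: add_pos_nonneg)
  have e1: "\<bar>eps1 a x0 y0 l1 l2\<bar> \<le> a * K / t"
    unfolding eps1_def K_def t_def
    by (rule abs_strain_le[OF y0 W site_offset_step1]) (use a in simp)
  have e2: "\<bar>eps2 a x0 y0 l1 l2\<bar> \<le> a * K / t"
    unfolding eps2_def K_def t_def
    by (rule abs_strain_le[OF y0 W site_offset_step2]) (use a in \<open>simp add: norm_mult\<close>)
  have "energy_density a kd x0 y0 l1 l2 \<le> 2 * kd * (a * K / t)\<^sup>2"
    using a kd e1 e2 by (rule energy_density_le[OF less_imp_le])
  also have "\<dots> = 2 * kd * (a * K)\<^sup>2 / t\<^sup>2" by (simp add: power_divide)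
  also have "\<dots> \<le> 2 * kd * (a * K)\<^sup>2 / (m\<^sup>2 * P)"
  proof (rule divide_left_mono)
    have "0 < m\<^sup>2 * P" using m P by simp
    moreover from this have "0 < t\<^sup>2" using mP by linarith
    ultimately show "0 < t\<^sup>2 * (m\<^sup>2 * P)" by simp
  qed (use mP kd in auto)
  finally show "energy_density a kd x0 y0 l1 l2 \<le> 2 * kd * (a * K)\<^sup>2 / m\<^sup>2 / P"
    by simp
qed

lemma sum_inverse_one_plus_square_symmetric_le:
  "(\<Sum>l\<in>{-int M..int M}. 1 / (1 + (real_of_int l)\<^sup>2)) \<le> 5 - 4 / (real M + 1)"
proof (induction M)
  case (Suc M)
  have "{-int (Suc M)..int (Suc M)} = insert (-(int M + 1)) (insert (int M + 1) {-int M..int M})"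
    by auto
  hence "(\<Sum>l\<in>{-int (Suc M)..int (Suc M)}. 1 / (1 + (real_of_int l)\<^sup>2))
           = 2 / (1 + (real M + 1)\<^sup>2) + (\<Sum>l\<in>{-int M..int M}. 1 / (1 + (real_of_int l)\<^sup>2))"
    by (simp add: power2_eq_square algebra_simps)
  also have "\<dots> \<le> 2 / (1 + (real M + 1)\<^sup>2) + (5 - 4 / (real M + 1))" using Suc by simp
  also have "2 / (1 + (real M + 1)\<^sup>2) \<le> 4 / (real M + 1) - 4 / (real M + 2)"
  proof -
    have "2 * ((real M + 1) * (real M + 2)) \<le> 4 * (1 + (real M + 1)\<^sup>2)"
      by (simp add: power2_eq_square algebra_simps)
    hence "2 / (1 + (real M + 1)\<^sup>2) \<le> 4 / ((real M + 1) * (real M + 2))"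
      by (simp add: divide_simps add_pos_nonneg)
    also have "\<dots> = 4 / (real M + 1) - 4 / (real M + 2)" by (simp add: field_simps)
    finally show ?thesis .
  qed
  finally show ?case by (simp add: add.commute)
qed simp

lemma sum_inverse_one_plus_square_le:
  assumes "finite F" shows "(\<Sum>l\<in>F. 1 / (1 + (real_of_int l)\<^sup>2)) \<le> 5"
proof -
  define M where "M = nat (Max (insert 0 (abs ` F)))"
  have "\<bar>l\<bar> \<le> Max (insert 0 (abs ` F))" if "l \<in> F" for l
    using assms that by (intro Max_ge) auto
  hence "F \<subseteq> {-int M..int M}" unfolding M_def by fastforce
  hence "(\<Sum>l\<in>F. 1 / (1 + (real_of_int l)\<^sup>2)) \<le> (\<Sum>l\<in>{-int M..int M}. 1 / (1 + (real_of_int l)\<^sup>2))"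
    by (intro sum_mono2) auto
  also have "\<dots> \<le> 5"
    using sum_inverse_one_plus_square_symmetric_le[of M] divide_nonneg_nonneg[of 4 "real M + 1"]
    by linarith
  finally show ?thesis .
qed

lemma sum_inverse_product_le:
  assumes "finite B"
  shows "(\<Sum>(l1, l2)\<in>B. 1 / ((1 + (real_of_int l1)\<^sup>2) * (1 + (real_of_int l2)\<^sup>2))) \<le> 25"
proof -
  define g where "g l = 1 / (1 + (real_of_int l)\<^sup>2)" for l
  have g: "0 \<le> g l" for l unfolding g_def by simp
  have "B \<subseteq> fst ` B \<times> snd ` B" by force
  hence "(\<Sum>(l1, l2)\<in>B. g l1 * g l2) \<le> (\<Sum>(l1, l2)\<in>fst ` B \<times> snd ` B. g l1 * g l2)"
    using assms g by (intro sum_mono2) (auto intro: mult_nonneg_nonneg)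
  also have "\<dots> = (\<Sum>l1\<in>fst ` B. g l1) * (\<Sum>l2\<in>snd ` B. g l2)"
    by (simp add: sum_product sum.cartesian_product)
  also have "\<dots> \<le> 5 * 5"
    using assms g sum_inverse_one_plus_square_le[of "fst ` B"] sum_inverse_one_plus_square_le[of "snd ` B"]
    by (intro mult_mono) (auto simp: g_def intro: sum_nonneg)
  finally show ?thesis by (simp add: g_def)
qed

lemma Bprime_norm_site_offset:
  "(l1, l2) \<in> Bprime a x0 y0 \<rho> N \<Longrightarrow> \<rho> * a < cmod (site_offset a x0 y0 l1 l2)"
  by (simp add: Bprime_def norm_site_offset)

lemma Bprime_mono: "0 < a \<Longrightarrow> N \<le> N' \<Longrightarrow> Bprime a x0 y0 \<rho> N \<subseteq> Bprime a x0 y0 \<rho> N'"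
  unfolding Bprime_def by (auto intro: less_le_trans mult_right_mono)

lemma finite_Bprime:
  assumes a: "0 < a" shows "finite (Bprime a x0 y0 \<rho> N)"
proof -
  define k where "k = \<lceil>N + (\<bar>x0\<bar> + \<bar>y0\<bar>) / a\<rceil>"
  have "\<bar>l\<bar> \<le> k" if "\<bar>real_of_int l * a - c\<bar> < N * a" "\<bar>c\<bar> \<le> \<bar>x0\<bar> + \<bar>y0\<bar>" for l c
  proof -
    have "\<bar>real_of_int l * a\<bar> \<le> N * a + (\<bar>x0\<bar> + \<bar>y0\<bar>)" using that by linarith
    hence "\<bar>real_of_int l\<bar> \<le> (N * a + (\<bar>x0\<bar> + \<bar>y0\<bar>)) / a" using a by (simp add: abs_mult le_divide_eq)
    also have "\<dots> = N + (\<bar>x0\<bar> + \<bar>y0\<bar>) / a" using a by (simp add: field_simps)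
    finally have "\<bar>real_of_int l\<bar> \<le> N + (\<bar>x0\<bar> + \<bar>y0\<bar>) / a" .
    thus ?thesis unfolding k_def by linarith
  qed
  hence "Bprime a x0 y0 \<rho> N \<subseteq> {-k..k} \<times> {-k..k}"
    unfolding Bprime_def
    by (fastforce dest: le_less_trans[OF real_sqrt_ge_abs1] le_less_trans[OF real_sqrt_ge_abs2])
  thus ?thesis by (rule finite_subset) auto
qed

lemma Energy_mono: "0 < a \<Longrightarrow> 0 \<le> kd \<Longrightarrow> mono (Energy a kd x0 y0 \<rho>)"
  unfolding mono_def Energy_eq_sum_energy_density
  using Bprime_mono finite_Bprime energy_density_nonneg
  by (intro allI impI sum_mono2) auto

lemma Energy_bounded:
  assumes a: "0 < a" and kd: "0 \<le> kd" and y0: "2 * \<bar>y0\<bar> < \<rho> * a"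
  obtains B where "\<And>N. Energy a kd x0 y0 \<rho> N \<le> B"
proof -
  obtain C where C: "0 \<le> C"
    and decay: "\<And>l1 l2. \<rho> * a < cmod (site_offset a x0 y0 l1 l2) \<Longrightarrow>
           energy_density a kd x0 y0 l1 l2 \<le> C / ((1 + (real_of_int l1)\<^sup>2) * (1 + (real_of_int l2)\<^sup>2))"
    using energy_density_decay[OF a kd y0] by blast
  have "Energy a kd x0 y0 \<rho> N \<le> C * 25" for N
  proof -
    have "Energy a kd x0 y0 \<rho> N
            \<le> (\<Sum>(l1, l2)\<in>Bprime a x0 y0 \<rho> N. C / ((1 + (real_of_int l1)\<^sup>2) * (1 + (real_of_int l2)\<^sup>2)))"
      unfolding Energy_eq_sum_energy_density
      by (intro sum_mono) (auto intro: decay Bprime_norm_site_offset)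
    also have "\<dots> = C * (\<Sum>(l1, l2)\<in>Bprime a x0 y0 \<rho> N.
                          1 / ((1 + (real_of_int l1)\<^sup>2) * (1 + (real_of_int l2)\<^sup>2)))"
      by (simp add: sum_distrib_left case_prod_unfold)
    also have "\<dots> \<le> C * 25"
      using sum_inverse_product_le[OF finite_Bprime[OF a]] C by (rule mult_left_mono)
    finally show ?thesis .
  qed
  thus ?thesis by (rule that)
qed

lemma mono_bounded_convergent_at_top:
  fixes f :: "real \<Rightarrow> real"
  assumes "mono f" and "\<And>x. f x \<le> B"
  shows "\<exists>L. (f \<longlongrightarrow> L) at_top"
proof -
  have "(\<lambda>n. f (real n)) \<longlonglongrightarrow> (SUP n. f (real n))"
  proof (rule LIMSEQ_incseq_SUP)
    show "bdd_above (range (\<lambda>n. f (real n)))" using assms(2) by (intro bdd_aboveI2)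
    show "incseq (\<lambda>n. f (real n))" using assms(1) by (simp add: incseq_def mono_def)
  qed
  with assms(1) show ?thesis by (blast intro: tendsto_at_topI_sequentially_real)
qed

theorem lemmaA2:
  fixes a kd x0 y0 \<rho> :: real
  assumes "a > 0" and "kd > 0" and "y0 \<noteq> 0" and "\<rho> > 0" and "\<rho> * a > 2 * \<bar>y0\<bar>"
  shows "\<exists>L. ((\<lambda>N. Energy a kd x0 y0 \<rho> N) \<longlongrightarrow> L) at_top"
proof -
  have kd: "0 \<le> kd" using assms(2) by simp
  obtain B where "\<And>N. Energy a kd x0 y0 \<rho> N \<le> B"
    using Energy_bounded[OF assms(1) kd assms(5)] by blast
  with Energy_mono[OF assms(1) kd] show ?thesis
    by (intro mono_bounded_convergent_at_top) auto
qed

end
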